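(* If $\mathcal{H}$ is a Hilbert space with $\dim\mathcal{H}>2$, then the spectral sheaf $p:E\to\mathcal{W}$ has no global sections, i.e. there is no continuous map $\tau:\mathcal{W}\to E$ with $p\circ\tau=1_{\mathcal{W}}$.
   Context: Let $L(\mathcal{H})$ be the complete orthomodular lattice of closed subspaces of the (complex) Hilbert space $\mathcal{H}$ ordered by inclusion, $\mathcal{W}$ the family of all Boolean subalgebras of $L(\mathcal{H})$ ordered by inclusion, and $\mathbf{2}$ the two-element Boolean algebra. For a poset, the topology used has as open sets exactly the decreasing (downward closed) subsets; $\mathcal{W}$ carries this topology. Let $E=\{(W,f): W\in\mathcal{W},\ f:W\to\mathbf{2}\text{ a Boolean homomorphism}\}$, ordered by $(W_1,f_1)\le(W_2,f_2)$ iff $W_1\subseteq W_2$ and $f_1=f_2|_{W_1}$, with the topology of decreasing sets. The spectral sheaf is $p:E\to\mathcal{W}$, $p(W,f)=W$. *)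

theory Defs
  imports "HOL-Analysis.Analysis" "HOL-Library.FuncSet"
begin

text \<open>A complex Hilbert space is modelled as a complete real normed vector type 'a
  together with a complex scalar multiplication smul (extending the real one) and a
  complex inner product ip (conjugate-linear in the first argument) inducing the norm.
  The topology and completeness are those of the norm.\<close>

definition complex_hilbert ::
  "(complex \<Rightarrow> 'a::{real_normed_vector, complete_space} \<Rightarrow> 'a) \<Rightarrow> ('a \<Rightarrow> 'a \<Rightarrow> complex) \<Rightarrow> bool" where
  "complex_hilbert smul ip \<longleftrightarrow>
     (\<forall>a b x. smul (a + b) x = smul a x + smul b x) \<and>
     (\<forall>a x y. smul a (x + y) = smul a x + smul a y) \<and>
     (\<forall>a b x. smul (a * b) x = smul a (smul b x)) \<and>
     (\<forall>x. smul 1 x = x) \<and>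
     (\<forall>r x. smul (complex_of_real r) x = scaleR r x) \<and>
     (\<forall>x y z. ip (x + y) z = ip x z + ip y z) \<and>
     (\<forall>c x y. ip (smul c x) y = cnj c * ip x y) \<and>
     (\<forall>x y. ip y x = cnj (ip x y)) \<and>
     (\<forall>x. norm x = sqrt (Re (ip x x)))"

definition dim_gt_2 :: "(complex \<Rightarrow> 'a::real_normed_vector \<Rightarrow> 'a) \<Rightarrow> bool" where
  "dim_gt_2 smul \<longleftrightarrow> (\<exists>u v w. \<forall>a b c.
      smul a u + smul b v + smul c w = 0 \<longrightarrow> a = 0 \<and> b = 0 \<and> c = 0)"

definition closed_subspace :: "(complex \<Rightarrow> 'a::real_normed_vector \<Rightarrow> 'a) \<Rightarrow> 'a set \<Rightarrow> bool" where
  "closed_subspace smul S \<longleftrightarrow> 0 \<in> S \<and> (\<forall>x\<in>S. \<forall>y\<in>S. x + y \<in> S) \<and>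
      (\<forall>c. \<forall>x\<in>S. smul c x \<in> S) \<and> closed S"

definition LH :: "(complex \<Rightarrow> 'a::real_normed_vector \<Rightarrow> 'a) \<Rightarrow> 'a set set" where
  "LH smul = {S. closed_subspace smul S}"

text \<open>Lattice operations of L(H): meet is intersection, join is the closed linear span of
  the union (closure of the sum), orthocomplement w.r.t. the inner product.\<close>
definition sjoin :: "'a::real_normed_vector set \<Rightarrow> 'a set \<Rightarrow> 'a set" where
  "sjoin S T = closure {x + y | x y. x \<in> S \<and> y \<in> T}"

definition orth :: "('a \<Rightarrow> 'a \<Rightarrow> complex) \<Rightarrow> 'a set \<Rightarrow> 'a set" where
  "orth ip S = {x. \<forall>y\<in>S. ip y x = 0}"

text \<open>Boolean subalgebras of L(H): sub-ortholattices (containing 0 and H, closed under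
  meet, join and orthocomplement) which are distributive, hence Boolean algebras.\<close>
definition bool_subalgebras ::
  "(complex \<Rightarrow> 'a::real_normed_vector \<Rightarrow> 'a) \<Rightarrow> ('a \<Rightarrow> 'a \<Rightarrow> complex) \<Rightarrow> 'a set set set" where
  "bool_subalgebras smul ip = {W. W \<subseteq> LH smul \<and> {0} \<in> W \<and> UNIV \<in> W \<and>
      (\<forall>a\<in>W. \<forall>b\<in>W. a \<inter> b \<in> W) \<and>
      (\<forall>a\<in>W. \<forall>b\<in>W. sjoin a b \<in> W) \<and>
      (\<forall>a\<in>W. orth ip a \<in> W) \<and>
      (\<forall>a\<in>W. \<forall>b\<in>W. \<forall>c\<in>W. a \<inter> sjoin b c = sjoin (a \<inter> b) (a \<inter> c))}"

text \<open>Boolean homomorphisms W \<rightarrow> 2 (2 = bool), represented extensionally on W.\<close>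
definition bool_hom ::
  "('a \<Rightarrow> 'a \<Rightarrow> complex) \<Rightarrow> 'a::real_normed_vector set set \<Rightarrow> ('a set \<Rightarrow> bool) \<Rightarrow> bool" where
  "bool_hom ip W f \<longleftrightarrow> f \<in> extensional W \<and> f {0} = False \<and> f UNIV = True \<and>
      (\<forall>a\<in>W. \<forall>b\<in>W. f (a \<inter> b) = (f a \<and> f b)) \<and>
      (\<forall>a\<in>W. \<forall>b\<in>W. f (sjoin a b) = (f a \<or> f b)) \<and>
      (\<forall>a\<in>W. f (orth ip a) = (\<not> f a))"

definition spectral_E ::
  "(complex \<Rightarrow> 'a::real_normed_vector \<Rightarrow> 'a) \<Rightarrow> ('a \<Rightarrow> 'a \<Rightarrow> complex)
     \<Rightarrow> ('a set set \<times> ('a set \<Rightarrow> bool)) set" where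
  "spectral_E smul ip = {(W, f). W \<in> bool_subalgebras smul ip \<and> bool_hom ip W f}"

definition sheaf_le :: "('a set set \<times> ('a set \<Rightarrow> bool)) \<Rightarrow> ('a set set \<times> ('a set \<Rightarrow> bool)) \<Rightarrow> bool" where
  "sheaf_le p q \<longleftrightarrow> fst p \<subseteq> fst q \<and> (\<forall>a\<in>fst p. snd p a = snd q a)"

definition down_closed :: "'b set \<Rightarrow> ('b \<Rightarrow> 'b \<Rightarrow> bool) \<Rightarrow> 'b set \<Rightarrow> bool" where
  "down_closed S le U \<longleftrightarrow> U \<subseteq> S \<and> (\<forall>x\<in>U. \<forall>y\<in>S. le y x \<longrightarrow> y \<in> U)"

definition downset_topology :: "'b set \<Rightarrow> ('b \<Rightarrow> 'b \<Rightarrow> bool) \<Rightarrow> 'b topology" where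
  "downset_topology S le = topology (down_closed S le)"

lemma istopology_down_closed: "istopology (down_closed S le)"
  unfolding istopology_def down_closed_def by blast

lemma openin_downset_topology:
  "openin (downset_topology S le) U \<longleftrightarrow> down_closed S le U"
  unfolding downset_topology_def by (simp only: topology_inverse'[OF istopology_down_closed])

lemma topspace_downset_topology: "topspace (downset_topology S le) = S"
  unfolding topspace_def openin_downset_topology down_closed_def by blast

end

theory Submission
  imports Defs
begin

text \<open>A global section \<tau> is monotone for the topologies of decreasing sets, so the Boolean
  homomorphisms \<tau> W agree on the elements that their algebras share. Hence P \<mapsto> \<tau> {0, P, P\<bottom>, H} P
  is a valuation that, for every orthonormal basis cut into finitely many classes, is true on the
  closed span of exactly one class. Such valuations do not exist once dim H > 2: an orthonormal
  basis is cut into triples plus a remainder of value False (the triple through a basis vector of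
  value True if the basis is finite, and |B \<times> 3| = |B| if it is infinite), and a three-dimensional
  Kochen-Specker configuration, copied into every triple, admits no consistent choice of true
  vectors.\<close>

lemma summable_on_Cauchy:
  fixes f :: "'i \<Rightarrow> 'b::{real_normed_vector, complete_space}"
  assumes tail: "\<And>e. e > 0 \<Longrightarrow>
    \<exists>F0. finite F0 \<and> F0 \<subseteq> A \<and> (\<forall>G. finite G \<longrightarrow> G \<subseteq> A - F0 \<longrightarrow> norm (sum f G) < e)"
  shows "f summable_on A"
proof -
  have "\<exists>P. eventually P (finite_subsets_at_top A) \<and>
          (\<forall>F F'. P F \<and> P F' \<longrightarrow> dist (sum f F) (sum f F') < e)" if "e > 0" for e
  proof -
    obtain F0 where F0: "finite F0" "F0 \<subseteq> A"
      and small: "\<And>G. finite G \<Longrightarrow> G \<subseteq> A - F0 \<Longrightarrow> norm (sum f G) < e / 2"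
      using tail[of "e / 2"] \<open>e > 0\<close> by auto
    define P where "P F \<longleftrightarrow> finite F \<and> F0 \<subseteq> F \<and> F \<subseteq> A" for F
    have "eventually P (finite_subsets_at_top A)"
      unfolding eventually_finite_subsets_at_top P_def using F0 by blast
    moreover have "dist (sum f F) (sum f F') < e" if "P F" "P F'" for F F'
    proof -
      have split: "sum f G = sum f (G - F0) + sum f F0" if "P G" for G
        using that unfolding P_def by (simp add: sum.subset_diff)
      have "dist (sum f F) (sum f F') = norm (sum f (F - F0) - sum f (F' - F0))"
        by (simp add: dist_norm split[OF \<open>P F\<close>] split[OF \<open>P F'\<close>])
      also have "\<dots> \<le> norm (sum f (F - F0)) + norm (sum f (F' - F0))"
        by (rule norm_triangle_ineq4)
      also have "\<dots> < e / 2 + e / 2"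
        using that unfolding P_def by (intro add_strict_mono small) auto
      finally show ?thesis by simp
    qed
    ultimately show ?thesis by blast
  qed
  then have "cauchy_filter (filtermap (sum f) (finite_subsets_at_top A))"
    by (simp add: cauchy_filter_metric_filtermap)
  moreover have "complete (UNIV :: 'b set)"
    by (meson Cauchy_convergent UNIV_I complete_def convergent_def)
  ultimately obtain L where "(sum f \<longlongrightarrow> L) (finite_subsets_at_top A)"
    using complete_uniform[where S = UNIV] by (force simp add: filterlim_def)
  then show ?thesis
    unfolding summable_on_def has_sum_def by blast
qed

lemma infinite_Times_bij:
  assumes "infinite B" and "finite I" and "I \<noteq> {}"
  obtains h where "bij_betw h (B \<times> I) B"
proof -
  include cardinal_syntax
  have "|I| <o |B|"
    using finite_ordLess_infinite[of "|I|" "|B|"] assms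
    by (simp add: card_of_well_order_on Field_card_of)
  then have "|B \<times> I| =o |B|"
    using card_of_Times_infinite[OF \<open>infinite B\<close> \<open>I \<noteq> {}\<close>] ordLess_imp_ordLeq by blast
  then show ?thesis
    using card_of_ordIso that by blast
qed

lemma continuous_map_downset_topology_mono:
  assumes f: "continuous_map (downset_topology S le) (downset_topology T le') f"
    and "reflp le'" and "transp le'"
    and "x \<in> S" and "y \<in> S" and "le x y"
  shows "le' (f x) (f y)"
proof -
  define U where "U = {q \<in> T. le' q (f y)}"
  have "down_closed T le' U"
    using \<open>transp le'\<close> unfolding down_closed_def U_def by (blast dest: transpD)
  then have "down_closed S le {z \<in> S. f z \<in> U}"
    using f unfolding continuous_map_def
    by (simp add: openin_downset_topology topspace_downset_topology)
  moreover have "y \<in> {z \<in> S. f z \<in> U}"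
    using f \<open>y \<in> S\<close> \<open>reflp le'\<close> unfolding U_def continuous_map_def
    by (auto simp: topspace_downset_topology reflpD)
  ultimately have "f x \<in> U"
    using \<open>x \<in> S\<close> \<open>le x y\<close> unfolding down_closed_def by blast
  then show ?thesis
    unfolding U_def by blast
qed

lemma UNIV_bool_set: "(UNIV :: bool set set) = {{}, {True}, {False}, UNIV}"
proof (rule UNIV_eq_I)
  fix A :: "bool set"
  have "A \<in> Pow {False, True}"
    by auto
  then show "A \<in> {{}, {True}, {False}, UNIV}"
    by (simp add: Pow_insert UNIV_bool) blast
qed

section \<open>A Kochen-Specker configuration in three dimensions\<close>

datatype int3 = Vec3 int int int

fun coord :: "int3 \<Rightarrow> nat \<Rightarrow> int" where
  "coord (Vec3 x y z) j = (if j = 1 then x else if j = 2 then y else z)"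

definition dot3 :: "int3 \<Rightarrow> int3 \<Rightarrow> int" where
  "dot3 v w = (\<Sum>j\<in>{1, 2, 3}. coord v j * coord w j)"

text \<open>The last conjunct is the resolution of the identity a a^T / |a|^2 + b b^T / |b|^2 + c c^T / |c|^2 = I
  with denominators cleared; it follows from the other conjuncts, but is cheaper to check than to derive.\<close>

definition orthogonal_frame :: "int3 \<times> int3 \<times> int3 \<Rightarrow> bool" where
  "orthogonal_frame = (\<lambda>(a, b, c).
     dot3 a b = 0 \<and> dot3 a c = 0 \<and> dot3 b c = 0 \<and> dot3 a a \<noteq> 0 \<and> dot3 b b \<noteq> 0 \<and> dot3 c c \<noteq> 0 \<and>
     (\<forall>j\<in>{1, 2, 3}. \<forall>k\<in>{1, 2, 3}.
        coord a j * coord a k * dot3 b b * dot3 c c + coord b j * coord b k * dot3 a a * dot3 c c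
          + coord c j * coord c k * dot3 a a * dot3 b b
        = (if j = k then dot3 a a * dot3 b b * dot3 c c else 0)))"

definition exactly_one :: "(int3 \<Rightarrow> bool) \<Rightarrow> int3 \<times> int3 \<times> int3 \<Rightarrow> bool" where
  "exactly_one V = (\<lambda>(a, b, c). (V a \<or> V b \<or> V c) \<and> \<not> (V a \<and> V b) \<and> \<not> (V a \<and> V c) \<and> \<not> (V b \<and> V c))"

text \<open>Integer representatives of 54 rays in three-dimensional space, grouped into 37 orthogonal frames.\<close>

definition ks_frames :: "(int3 \<times> int3 \<times> int3) list" where
  "ks_frames = [
    (Vec3 0 0 1, Vec3 1 2 0, Vec3 2 (-1) 0),
    (Vec3 1 (-1) (-1), Vec3 1 (-1) 2, Vec3 1 1 0),
    (Vec3 1 (-1) (-1), Vec3 1 0 1, Vec3 1 2 (-1)),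
    (Vec3 1 (-2) (-1), Vec3 1 0 1, Vec3 1 1 (-1)),
    (Vec3 1 (-1) 0, Vec3 1 1 (-2), Vec3 1 1 1),
    (Vec3 1 (-5) (-2), Vec3 1 1 (-2), Vec3 2 0 1),
    (Vec3 0 1 0, Vec3 1 0 2, Vec3 2 0 (-1)),
    (Vec3 1 (-1) (-2), Vec3 1 (-1) 1, Vec3 1 1 0),
    (Vec3 1 (-1) 1, Vec3 1 0 (-1), Vec3 1 2 1),
    (Vec3 1 2 (-1), Vec3 1 2 5, Vec3 2 (-1) 0),
    (Vec3 1 (-1) (-2), Vec3 1 5 (-2), Vec3 2 0 1),
    (Vec3 1 0 2, Vec3 2 (-1) (-1), Vec3 2 5 (-1)),
    (Vec3 0 2 (-1), Vec3 1 1 2, Vec3 5 (-1) (-2)),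
    (Vec3 0 1 2, Vec3 1 (-2) 1, Vec3 5 2 (-1)),
    (Vec3 0 1 1, Vec3 1 1 (-1), Vec3 2 (-1) 1),
    (Vec3 1 (-2) (-5), Vec3 1 (-2) 1, Vec3 2 1 0),
    (Vec3 0 1 (-1), Vec3 0 1 1, Vec3 1 0 0),
    (Vec3 1 0 2, Vec3 2 (-5) (-1), Vec3 2 1 (-1)),
    (Vec3 1 (-5) 2, Vec3 1 1 2, Vec3 2 0 (-1)),
    (Vec3 1 (-2) 0, Vec3 2 1 (-1), Vec3 2 1 5),
    (Vec3 0 0 1, Vec3 1 (-2) 0, Vec3 2 1 0),
    (Vec3 0 1 0, Vec3 1 0 (-1), Vec3 1 0 1),
    (Vec3 0 2 (-1), Vec3 1 (-1) (-2), Vec3 5 1 2),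
    (Vec3 1 (-2) 1, Vec3 1 0 (-1), Vec3 1 1 1),
    (Vec3 0 0 1, Vec3 1 (-1) 0, Vec3 1 1 0),
    (Vec3 0 1 2, Vec3 1 2 (-1), Vec3 5 (-2) 1),
    (Vec3 1 (-1) 0, Vec3 1 1 (-1), Vec3 1 1 2),
    (Vec3 0 1 2, Vec3 0 2 (-1), Vec3 1 0 0),
    (Vec3 1 0 (-2), Vec3 2 (-1) 1, Vec3 2 5 1),
    (Vec3 0 0 1, Vec3 0 1 0, Vec3 1 0 0),
    (Vec3 0 1 (-1), Vec3 1 1 1, Vec3 2 (-1) (-1)),
    (Vec3 0 1 (-1), Vec3 1 (-1) (-1), Vec3 2 1 1),
    (Vec3 1 2 0, Vec3 2 (-1) (-5), Vec3 2 (-1) 1),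
    (Vec3 1 0 (-2), Vec3 2 (-5) 1, Vec3 2 1 1),
    (Vec3 0 1 0, Vec3 1 0 (-2), Vec3 2 0 1),
    (Vec3 0 1 1, Vec3 1 (-1) 1, Vec3 2 1 (-1)),
    (Vec3 1 (-2) 0, Vec3 2 1 (-5), Vec3 2 1 1)
  ]"

lemma ks_frames_orthogonal: "\<forall>t\<in>set ks_frames. orthogonal_frame t"
  by (simp add: ks_frames_def orthogonal_frame_def dot3_def)

lemma ks_frames_uncolourable: "\<not> (\<forall>t\<in>set ks_frames. exactly_one V t)"
  by (simp add: ks_frames_def exactly_one_def) sat

definition unit_coord :: "int3 \<Rightarrow> nat \<Rightarrow> real" where
  "unit_coord v j = coord v j / sqrt (dot3 v v)"

lemma dot3_commute: "dot3 v w = dot3 w v"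
  unfolding dot3_def by (simp add: mult.commute)

lemma dot3_self_nonneg: "0 \<le> dot3 v v"
  unfolding dot3_def by (simp add: sum_nonneg)

lemma unit_coord_inner:
  "(\<Sum>j\<in>{1, 2, 3}. unit_coord v j * unit_coord w j) = dot3 v w / (sqrt (dot3 v v) * sqrt (dot3 w w))"
  by (simp add: unit_coord_def dot3_def add_divide_distrib)

lemma orthogonal_frame_orthonormal:
  assumes "orthogonal_frame (a, b, c)" and "v \<in> {a, b, c}" and "w \<in> {a, b, c}"
  shows "(\<Sum>j\<in>{1, 2, 3}. unit_coord v j * unit_coord w j) = (if v = w then 1 else 0)"
proof (cases "v = w")
  case True
  have "dot3 v v > 0"
    using assms dot3_self_nonneg[of v] unfolding orthogonal_frame_def by auto
  then show ?thesis
    using True by (subst unit_coord_inner) simp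
next
  case False
  then have "dot3 v w = 0"
    using assms unfolding orthogonal_frame_def by (auto simp: dot3_commute)
  then show ?thesis
    using False by (subst unit_coord_inner) simp
qed

lemma unit_coord_mult:
  "0 < dot3 v v \<Longrightarrow> unit_coord v j * unit_coord v k = coord v j * coord v k / dot3 v v"
  by (simp add: unit_coord_def)

lemma orthogonal_frame_complete:
  assumes "orthogonal_frame (a, b, c)" and "j \<in> {1, 2, 3}" and "k \<in> {1, 2, 3}"
  shows "unit_coord a j * unit_coord a k + unit_coord b j * unit_coord b k + unit_coord c j * unit_coord c k
    = (if j = k then 1 else 0)"
proof -
  let ?X = "coord a j * coord a k * dot3 b b * dot3 c c + coord b j * coord b k * dot3 a a * dot3 c c
    + coord c j * coord c k * dot3 a a * dot3 b b"
  have pos: "dot3 a a > 0" "dot3 b b > 0" "dot3 c c > 0"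
    using assms dot3_self_nonneg unfolding orthogonal_frame_def by (auto simp: order_less_le)
  have X: "?X = (if j = k then dot3 a a * dot3 b b * dot3 c c else 0)"
    using assms(2,3) assms(1)[unfolded orthogonal_frame_def prod.case] by blast
  have "unit_coord a j * unit_coord a k + unit_coord b j * unit_coord b k + unit_coord c j * unit_coord c k
      = coord a j * coord a k / dot3 a a + coord b j * coord b k / dot3 b b + coord c j * coord c k / dot3 c c"
    using pos by (simp add: unit_coord_mult)
  also have "\<dots> = real_of_int ?X / real_of_int (dot3 a a * dot3 b b * dot3 c c)"
    using pos by (simp add: field_simps)
  also have "\<dots> = (if j = k then 1 else 0)"
    unfolding X using pos by simp
  finally show ?thesis .
qed

locale complex_hilbert_space =
  fixes smul :: "complex \<Rightarrow> 'a::{real_normed_vector, complete_space} \<Rightarrow> 'a"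
    and ip :: "'a \<Rightarrow> 'a \<Rightarrow> complex"
  assumes hilbert: "complex_hilbert smul ip"
begin

lemma smul_add_left: "smul (a + b) x = smul a x + smul b x"
  using hilbert unfolding complex_hilbert_def by metis

lemma smul_add_right: "smul a (x + y) = smul a x + smul a y"
  using hilbert unfolding complex_hilbert_def by metis

lemma smul_smul: "smul a (smul b x) = smul (a * b) x"
  using hilbert unfolding complex_hilbert_def by metis

lemma smul_one [simp]: "smul 1 x = x"
  using hilbert unfolding complex_hilbert_def by metis

lemma smul_of_real: "smul (complex_of_real r) x = scaleR r x"
  using hilbert unfolding complex_hilbert_def by metis

lemma ip_add_left: "ip (x + y) z = ip x z + ip y z"
  using hilbert unfolding complex_hilbert_def by metis

lemma ip_smul_left [simp]: "ip (smul c x) y = cnj c * ip x y"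
  using hilbert unfolding complex_hilbert_def by metis

lemma ip_cnj: "ip y x = cnj (ip x y)"
  using hilbert unfolding complex_hilbert_def by metis

lemma norm_eq_sqrt_ip: "norm x = sqrt (Re (ip x x))"
  using hilbert unfolding complex_hilbert_def by metis

lemma smul_diff_right: "smul a (x - y) = smul a x - smul a y"
  using smul_add_right[of a "x - y" y] by (simp add: eq_diff_eq)

lemma smul_zero_left [simp]: "smul 0 x = 0"
  using smul_of_real[of 0 x] by simp

lemma smul_minus_left: "smul (- a) x = - smul a x"
  using add.inverse_unique[of "smul a x" "smul (- a) x"] smul_add_left[of a "- a" x] by simp

lemma smul_diff_left: "smul (a - b) x = smul a x - smul b x"
  using smul_add_left[of a "- b" x] by (simp add: smul_minus_left)

lemma ip_add_right: "ip x (y + z) = ip x y + ip x z"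
  by (metis ip_cnj ip_add_left complex_cnj_add)

lemma ip_smul_right [simp]: "ip x (smul c y) = c * ip x y"
  by (metis ip_cnj ip_smul_left complex_cnj_cnj complex_cnj_mult)

lemma ip_zero_left [simp]: "ip 0 y = 0"
  using ip_add_left[of 0 0 y] by simp

lemma ip_zero_right [simp]: "ip x 0 = 0"
  using ip_add_right[of x 0 0] by simp

lemma ip_diff_right: "ip x (y - z) = ip x y - ip x z"
  using ip_add_right[of x "y - z" z] by simp

lemma ip_sum_left: "ip (sum f F) y = (\<Sum>i\<in>F. ip (f i) y)"
  by (induction F rule: infinite_finite_induct) (auto simp: ip_add_left)

lemma ip_sum_right: "ip x (sum f F) = (\<Sum>i\<in>F. ip x (f i))"
  by (induction F rule: infinite_finite_induct) (auto simp: ip_add_right)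

lemma Re_ip_self: "Re (ip x x) = (norm x)\<^sup>2"
  using norm_eq_sqrt_ip[of x] norm_ge_zero[of x] by (metis real_sqrt_ge_0_iff real_sqrt_pow2)

lemma ip_self: "ip x x = complex_of_real ((norm x)\<^sup>2)"
  using ip_cnj[of x x] Re_ip_self[of x] by (simp add: complex_eq_iff)

lemma cmod_ip_self: "cmod (ip x x) = (norm x)\<^sup>2"
  unfolding ip_self norm_of_real by simp

lemma ip_self_eq_0 [simp]: "ip x x = 0 \<longleftrightarrow> x = 0"
  by (simp add: ip_self)

lemma norm_smul: "norm (smul c x) = cmod c * norm x"
proof -
  have "(norm (smul c x))\<^sup>2 = cmod (ip (smul c x) (smul c x))"
    by (simp only: cmod_ip_self)
  also have "\<dots> = (cmod c * norm x)\<^sup>2"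
    by (simp add: cmod_ip_self norm_mult power2_eq_square mult_ac)
  finally show ?thesis
    by (simp add: power2_eq_iff_nonneg)
qed

lemma pythagoras:
  assumes "ip x y = 0"
  shows "(norm (x + y))\<^sup>2 = (norm x)\<^sup>2 + (norm y)\<^sup>2"
proof -
  have "ip y x = 0"
    using assms ip_cnj[of x y] by simp
  then have "ip (x + y) (x + y) = ip x x + ip y y"
    using assms by (simp add: ip_add_left ip_add_right)
  from arg_cong[OF this, of Re] show ?thesis
    by (simp add: Re_ip_self)
qed

lemma cauchy_schwarz: "cmod (ip x y) \<le> norm x * norm y"
proof (cases "x = 0")
  case False
  define t where "t = ip x y / ip x x"
  define z where "z = y - smul t x"
  have "ip x z = 0"
    using False by (simp add: z_def t_def ip_diff_right)
  then have "(norm y)\<^sup>2 = (norm z)\<^sup>2 + (norm (smul t x))\<^sup>2"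
    using pythagoras[of z "smul t x"] ip_cnj[of x z] by (simp add: z_def)
  then have "(cmod t * norm x)\<^sup>2 \<le> (norm y)\<^sup>2"
    by (simp add: norm_smul)
  then have "cmod t * norm x \<le> norm y"
    by (rule power2_le_imp_le) simp
  then have "cmod t * norm x * norm x \<le> norm y * norm x"
    by (rule mult_right_mono) simp
  moreover have "cmod t * norm x * norm x = cmod (ip x y)"
    using False by (simp add: t_def norm_divide cmod_ip_self power2_eq_square)
  ultimately show ?thesis
    by (simp add: mult.commute)
qed simp

lemma bounded_linear_ip: "bounded_linear (ip x)"
proof (rule bounded_linear_intro[where K = "norm x"])
  show "ip x (scaleR r y) = scaleR r (ip x y)" for r y
    using ip_smul_right[of x "complex_of_real r" y] by (simp add: smul_of_real scaleR_conv_of_real)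
  show "norm (ip x y) \<le> norm y * norm x" for y
    using cauchy_schwarz[of x y] by (simp add: mult.commute)
qed (rule ip_add_right)

lemma closed_subspace_orth: "closed_subspace smul (orth ip S)"
proof -
  have "orth ip S = (\<Inter>y\<in>S. ip y -` {0})"
    by (auto simp: orth_def)
  moreover have "closed (ip y -` {0})" for y
    using bounded_linear_ip[of y] by (intro closed_vimage linear_continuous_on) auto
  ultimately have "closed (orth ip S)"
    by auto
  then show ?thesis
    unfolding closed_subspace_def orth_def by (simp add: ip_add_right)
qed

section \<open>Orthonormal bases and Fourier series\<close>

definition orthonormal :: "'a set \<Rightarrow> bool" where
  "orthonormal C \<longleftrightarrow> (\<forall>c\<in>C. \<forall>d\<in>C. ip c d = (if c = d then 1 else 0))"

definition orthonormal_basis :: "'a set \<Rightarrow> bool" where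
  "orthonormal_basis C \<longleftrightarrow> orthonormal C \<and> orth ip C = {0}"

lemma orthonormal_basisI:
  "orthonormal C \<Longrightarrow> (\<And>x. x \<in> orth ip C \<Longrightarrow> x = 0) \<Longrightarrow> orthonormal_basis C"
  using closed_subspace_orth[of C] unfolding orthonormal_basis_def closed_subspace_def by blast

lemma orthonormal_subset: "orthonormal C \<Longrightarrow> D \<subseteq> C \<Longrightarrow> orthonormal D"
  unfolding orthonormal_def by blast

lemma orthonormal_image:
  assumes "\<And>p q. p \<in> J \<Longrightarrow> q \<in> J \<Longrightarrow> ip (F p) (F q) = (if p = q then 1 else 0)"
  shows "orthonormal (F ` J)"
  unfolding orthonormal_def using assms by (auto, metis zero_neq_one)

lemma orthonormal_Un:
  assumes "orthonormal S" and "orthonormal T" and "\<And>s t. s \<in> S \<Longrightarrow> t \<in> T \<Longrightarrow> ip s t = 0"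
  shows "orthonormal (S \<union> T)"
proof -
  have "ip t s = 0" if "s \<in> S" "t \<in> T" for s t
    using assms(3)[OF that] ip_cnj[of t s] by simp
  moreover have "s \<noteq> t" if "s \<in> S" "t \<in> T" for s t
    using assms that unfolding orthonormal_def by force
  ultimately show ?thesis
    using assms unfolding orthonormal_def by (auto simp: Ball_def)
qed

lemma orthonormal_basis_eq_0:
  "orthonormal_basis C \<Longrightarrow> (\<And>c. c \<in> C \<Longrightarrow> ip c x = 0) \<Longrightarrow> x = 0"
  unfolding orthonormal_basis_def orth_def by blast

lemma norm_orthonormal: "orthonormal C \<Longrightarrow> c \<in> C \<Longrightarrow> norm c = 1"
  using Re_ip_self[of c] norm_ge_zero[of c] unfolding orthonormal_def by (auto simp: power2_eq_1_iff)

lemma ip_orthonormal_sum: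
  assumes "orthonormal C" and "finite F" and "F \<subseteq> C" and "c \<in> C"
  shows "ip c (\<Sum>d\<in>F. smul (a d) d) = (if c \<in> F then a c else 0)"
proof -
  have "ip c (\<Sum>d\<in>F. smul (a d) d) = (\<Sum>d\<in>F. a d * ip c d)"
    by (simp add: ip_sum_right)
  also have "\<dots> = (\<Sum>d\<in>F. if d = c then a d else 0)"
    using assms unfolding orthonormal_def by (intro sum.cong) auto
  also have "\<dots> = (if c \<in> F then a c else 0)"
    using \<open>finite F\<close> by (simp add: sum.delta')
  finally show ?thesis .
qed

lemma norm_orthonormal_sum:
  assumes "orthonormal C" and "finite F" and "F \<subseteq> C"
  shows "(norm (\<Sum>d\<in>F. smul (a d) d))\<^sup>2 = (\<Sum>d\<in>F. (cmod (a d))\<^sup>2)"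
  using assms(2,3)
proof (induction F rule: finite_induct)
  case (insert d F)
  have "ip (smul (a d) d) (\<Sum>d\<in>F. smul (a d) d) = 0"
    using ip_orthonormal_sum[OF assms(1) insert(1)] insert by simp
  moreover have "norm d = 1"
    using insert(4) norm_orthonormal[OF assms(1)] by simp
  ultimately show ?case
    using insert by (simp add: pythagoras norm_smul)
qed simp

lemma bessel_inequality:
  assumes "orthonormal C" and "finite F" and "F \<subseteq> C"
  shows "(\<Sum>d\<in>F. (cmod (ip d x))\<^sup>2) \<le> (norm x)\<^sup>2"
proof -
  define s where "s = (\<Sum>d\<in>F. smul (ip d x) d)"
  have "ip d (x - s) = 0" if "d \<in> F" for d
    using that assms ip_orthonormal_sum[OF assms, of d "\<lambda>d. ip d x"]
    by (auto simp: s_def ip_diff_right)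
  then have "ip s (x - s) = 0"
    by (simp add: s_def ip_sum_left)
  then have "(norm x)\<^sup>2 = (norm s)\<^sup>2 + (norm (x - s))\<^sup>2"
    using pythagoras[of s "x - s"] by simp
  then show ?thesis
    using norm_orthonormal_sum[OF assms, of "\<lambda>d. ip d x"] by (simp add: s_def)
qed

lemma summable_fourier:
  assumes "orthonormal D"
  shows "(\<lambda>d. smul (ip d x) d) summable_on D"
proof (rule summable_on_Cauchy)
  fix e :: real
  assume "e > 0"
  define g where "g d = (cmod (ip d x))\<^sup>2" for d
  have g: "g summable_on D"
    unfolding g_def using bessel_inequality[OF assms]
    by (intro nonneg_bdd_above_summable_on bdd_aboveI[where M = "(norm x)\<^sup>2"]) auto
  then obtain F0 where F0: "finite F0" "F0 \<subseteq> D"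
    and approx: "dist (sum g F0) (infsum g D) \<le> e\<^sup>2 / 2"
    using infsum_finite_approximation[of g D "e\<^sup>2 / 2"] \<open>e > 0\<close> by auto
  have F0_close: "infsum g D - sum g F0 < e\<^sup>2"
    using approx zero_less_power[OF \<open>e > 0\<close>, of 2] unfolding dist_real_def abs_le_iff by linarith
  have "norm (\<Sum>d\<in>G. smul (ip d x) d) < e" if "finite G" "G \<subseteq> D - F0" for G
  proof -
    have "sum g F0 + sum g G = sum g (F0 \<union> G)"
      using that F0 by (subst sum.union_disjoint) auto
    also have "\<dots> = infsum g (F0 \<union> G)"
      using that F0 by simp
    also have "\<dots> \<le> infsum g D"
      using that F0 g by (intro infsum_mono_neutral) (auto simp: g_def)
    finally have "sum g G < e\<^sup>2"
      using F0_close by linarith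
    moreover have "(norm (\<Sum>d\<in>G. smul (ip d x) d))\<^sup>2 = sum g G"
      using norm_orthonormal_sum[OF assms \<open>finite G\<close>, of "\<lambda>d. ip d x"] that
      by (auto simp: g_def)
    ultimately have "(norm (\<Sum>d\<in>G. smul (ip d x) d))\<^sup>2 < e\<^sup>2"
      by simp
    then show ?thesis
      using \<open>e > 0\<close> by (simp add: power_less_imp_less_base)
  qed
  then show "\<exists>F0. finite F0 \<and> F0 \<subseteq> D \<and>
      (\<forall>G. finite G \<longrightarrow> G \<subseteq> D - F0 \<longrightarrow> norm (sum (\<lambda>d. smul (ip d x) d) G) < e)"
    using F0 by blast
qed

definition orth_proj :: "'a set \<Rightarrow> 'a \<Rightarrow> 'a" where
  "orth_proj D x = infsum (\<lambda>d. smul (ip d x) d) D"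

lemma has_sum_ip_orth_proj:
  assumes "orthonormal D"
  shows "((\<lambda>d. ip d x * ip y d) has_sum ip y (orth_proj D x)) D"
proof -
  have "((\<lambda>d. smul (ip d x) d) has_sum orth_proj D x) D"
    using summable_fourier[OF assms] by (simp add: orth_proj_def)
  from has_sum_bounded_linear[OF bounded_linear_ip this, of y] show ?thesis
    by simp
qed

lemma ip_orth_proj:
  assumes "orthonormal C" and "D \<subseteq> C" and "c \<in> C"
  shows "ip c (orth_proj D x) = (if c \<in> D then ip c x else 0)"
proof (rule has_sum_unique[OF has_sum_ip_orth_proj[OF orthonormal_subset[OF assms(1,2)]]])
  have "ip c d = (if c = d then 1 else 0)" if "d \<in> D" for d
    using assms that unfolding orthonormal_def by blast
  then show "((\<lambda>d. ip d x * ip c d) has_sum (if c \<in> D then ip c x else 0)) D"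
    by (intro has_sum_finite_neutralI[where B = "D \<inter> {c}"]) auto
qed

lemma ip_orth_proj_eq_0:
  assumes "orthonormal D" and "\<And>d. d \<in> D \<Longrightarrow> ip y d = 0"
  shows "ip y (orth_proj D x) = 0"
  using has_sum_unique[OF has_sum_ip_orth_proj[OF assms(1)] has_sum_0] assms(2) by auto

lemma orth_proj_eq_self:
  assumes "orthonormal_basis C" and "D \<subseteq> C" and "\<And>c. c \<in> C - D \<Longrightarrow> ip c x = 0"
  shows "orth_proj D x = x"
proof -
  have "x - orth_proj D x = 0"
    using assms ip_orth_proj[of C D] unfolding orthonormal_basis_def
    by (intro orthonormal_basis_eq_0[OF assms(1)]) (auto simp: ip_diff_right)
  then show ?thesis
    by simp
qed

definition unit_vec :: "'a \<Rightarrow> 'a" where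
  "unit_vec x = smul (complex_of_real (1 / norm x)) x"

lemma ip_unit_vec_right: "ip y (unit_vec x) = complex_of_real (1 / norm x) * ip y x"
  by (simp add: unit_vec_def)

lemma ip_unit_vec: "ip (unit_vec x) (unit_vec y) = complex_of_real (1 / norm x * (1 / norm y)) * ip x y"
  by (simp add: unit_vec_def)

lemma ip_unit_vec_self: "x \<noteq> 0 \<Longrightarrow> ip (unit_vec x) (unit_vec x) = 1"
proof -
  assume "x \<noteq> 0"
  then have "norm (unit_vec x) = 1"
    by (simp add: unit_vec_def norm_smul norm_divide)
  then show ?thesis
    by (simp add: ip_self)
qed

lemma orthonormal_Union_chain:
  assumes "\<C> \<noteq> {}" and \<C>: "subset.chain \<A> \<C>" and "\<And>T. T \<in> \<C> \<Longrightarrow> orthonormal T"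
  shows "orthonormal (\<Union>\<C>)"
  unfolding orthonormal_def
proof (intro ballI)
  fix c d
  assume cd: "c \<in> \<Union>\<C>" "d \<in> \<Union>\<C>"
  obtain T where "T \<in> \<C>" "{c, d} \<subseteq> T"
    by (rule finite_subset_Union_chain[of "{c, d}" \<C> \<A>]) (use cd \<open>\<C> \<noteq> {}\<close> \<C> in auto)
  then show "ip c d = (if c = d then 1 else 0)"
    using assms(3) unfolding orthonormal_def by blast
qed

lemma maximal_orthonormal_basis:
  assumes M: "orthonormal M" and max: "\<And>u. orthonormal (insert u M) \<Longrightarrow> u \<in> M"
  shows "orthonormal_basis M"
proof (rule orthonormal_basisI[OF M], rule ccontr)
  fix x
  assume x: "x \<in> orth ip M" and "x \<noteq> 0"
  have M_u: "ip c (unit_vec x) = 0" if "c \<in> M" for c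
    using x that by (simp add: ip_unit_vec_right orth_def)
  have "orthonormal {unit_vec x}"
    using ip_unit_vec_self[OF \<open>x \<noteq> 0\<close>] by (simp add: orthonormal_def)
  then have "orthonormal (M \<union> {unit_vec x})"
    using M M_u by (intro orthonormal_Un) auto
  then have "unit_vec x \<in> M"
    using max by simp
  then show False
    using M_u ip_unit_vec_self[OF \<open>x \<noteq> 0\<close>] by force
qed

lemma orthonormal_basis_extend:
  assumes "orthonormal S"
  obtains B where "S \<subseteq> B" and "orthonormal_basis B"
proof -
  define \<A> where "\<A> = {T. S \<subseteq> T \<and> orthonormal T}"
  have "\<Union>\<C> \<in> \<A>" if "\<C> \<noteq> {}" and \<C>: "subset.chain \<A> \<C>" for \<C>
  proof -
    have "orthonormal T" "S \<subseteq> T" if "T \<in> \<C>" for T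
      using that \<C> unfolding \<A>_def subset_chain_def by blast+
    then show ?thesis
      using orthonormal_Union_chain[OF \<open>\<C> \<noteq> {}\<close> \<C>] \<open>\<C> \<noteq> {}\<close> unfolding \<A>_def by blast
  qed
  moreover have "\<A> \<noteq> {}"
    using assms unfolding \<A>_def by blast
  ultimately obtain M where "M \<in> \<A>" and max: "\<And>X. X \<in> \<A> \<Longrightarrow> M \<subseteq> X \<Longrightarrow> X = M"
    using subset_Zorn_nonempty[of \<A>] by blast
  then have "S \<subseteq> M" and "orthonormal M"
    unfolding \<A>_def by simp_all
  moreover have "u \<in> M" if "orthonormal (insert u M)" for u
    using max[of "insert u M"] that \<open>S \<subseteq> M\<close> unfolding \<A>_def by blast
  ultimately show ?thesis
    using that maximal_orthonormal_basis by blast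
qed

lemma three_orthonormal:
  assumes "dim_gt_2 smul"
  obtains e1 e2 e3 where "orthonormal {e1, e2, e3}" and "e1 \<noteq> e2" and "e1 \<noteq> e3" and "e2 \<noteq> e3"
proof -
  obtain u v w where indep: "\<And>a b c. smul a u + smul b v + smul c w = 0 \<Longrightarrow> a = 0 \<and> b = 0 \<and> c = 0"
    using assms unfolding dim_gt_2_def by blast
  define \<alpha> where "\<alpha> = ip u v / ip u u"
  define v' where "v' = v - smul \<alpha> u"
  define \<beta> where "\<beta> = ip u w / ip u u"
  define \<gamma> where "\<gamma> = ip v' w / ip v' v'"
  define w' where "w' = w - smul \<beta> u - smul \<gamma> v'"
  have "u \<noteq> 0"
    using indep[of 1 0 0] by auto
  have "v' = smul (- \<alpha>) u + smul 1 v + smul 0 w"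
    by (simp add: v'_def smul_minus_left)
  then have "v' \<noteq> 0"
    using indep by fastforce
  have "w' = smul (\<gamma> * \<alpha> - \<beta>) u + smul (- \<gamma>) v + smul 1 w"
    by (simp add: w'_def v'_def smul_diff_left smul_minus_left smul_diff_right smul_smul algebra_simps)
  then have "w' \<noteq> 0"
    using indep by fastforce
  have uv': "ip u v' = 0"
    using \<open>u \<noteq> 0\<close> by (simp add: v'_def \<alpha>_def ip_diff_right)
  have uw': "ip u w' = 0"
    using \<open>u \<noteq> 0\<close> uv' by (simp add: w'_def \<beta>_def ip_diff_right)
  have v'w': "ip v' w' = 0"
    using \<open>v' \<noteq> 0\<close> uv' ip_cnj[of v' u] by (simp add: w'_def \<gamma>_def ip_diff_right)
  have orth: "ip (unit_vec x) (unit_vec y) = 0" "ip (unit_vec y) (unit_vec x) = 0"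
    if "ip x y = 0" for x y
    using that ip_cnj[of y x] by (simp_all add: ip_unit_vec)
  note unit = ip_unit_vec_self[OF \<open>u \<noteq> 0\<close>] ip_unit_vec_self[OF \<open>v' \<noteq> 0\<close>]
    ip_unit_vec_self[OF \<open>w' \<noteq> 0\<close>]
  show ?thesis
  proof (rule that)
    show "orthonormal {unit_vec u, unit_vec v', unit_vec w'}"
      using unit orth[OF uv'] orth[OF uw'] orth[OF v'w'] unfolding orthonormal_def by auto
    show "unit_vec u \<noteq> unit_vec v'" "unit_vec u \<noteq> unit_vec w'" "unit_vec v' \<noteq> unit_vec w'"
      using unit orth[OF uv'] orth[OF uw'] orth[OF v'w'] by auto
  qed
qed

section \<open>Boolean algebras generated by labelled bases\<close>

text \<open>The closed span of the basis vectors with label in A, written as an orthocomplement so that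
  it is closed by construction.\<close>

definition label_span :: "'a set \<Rightarrow> ('a \<Rightarrow> 'i) \<Rightarrow> 'i set \<Rightarrow> 'a set" where
  "label_span C \<kappa> A = orth ip {c \<in> C. \<kappa> c \<notin> A}"

lemma mem_label_span: "x \<in> label_span C \<kappa> A \<longleftrightarrow> (\<forall>c\<in>C. \<kappa> c \<notin> A \<longrightarrow> ip c x = 0)"
  unfolding label_span_def orth_def by auto

lemma label_span_empty: "orthonormal_basis C \<Longrightarrow> label_span C \<kappa> {} = {0}"
  unfolding label_span_def orthonormal_basis_def by simp

lemma label_span_full: "\<kappa> ` C \<subseteq> A \<Longrightarrow> label_span C \<kappa> A = UNIV"
  by (auto simp: mem_label_span image_subset_iff)

lemma label_span_Int: "label_span C \<kappa> A \<inter> label_span C \<kappa> B = label_span C \<kappa> (A \<inter> B)"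
  by (auto simp: mem_label_span)

lemma label_span_comp: "label_span C (g \<circ> \<kappa>) A = label_span C \<kappa> (g -` A)"
  by (simp add: label_span_def)

lemma closed_subspace_label_span: "closed_subspace smul (label_span C \<kappa> A)"
  unfolding label_span_def by (rule closed_subspace_orth)

lemma orth_label_span:
  assumes C: "orthonormal_basis C"
  shows "orth ip (label_span C \<kappa> A) = label_span C \<kappa> (- A)"
proof (intro set_eqI iffI)
  fix y
  assume y: "y \<in> orth ip (label_span C \<kappa> A)"
  have "c \<in> label_span C \<kappa> A" if "c \<in> C" "\<kappa> c \<in> A" for c
    using C that unfolding mem_label_span orthonormal_basis_def orthonormal_def by auto
  then show "y \<in> label_span C \<kappa> (- A)"
    using y by (auto simp: mem_label_span orth_def)
next
  fix y
  assume y: "y \<in> label_span C \<kappa> (- A)"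
  define D where "D = {c \<in> C. \<kappa> c \<in> A}"
  have D: "orthonormal D"
    using C orthonormal_subset[of C D] unfolding orthonormal_basis_def D_def by auto
  have "ip x y = 0" if x: "x \<in> label_span C \<kappa> A" for x
  proof -
    have "orth_proj D x = x"
      using x by (intro orth_proj_eq_self[OF C]) (auto simp: D_def mem_label_span)
    moreover have "ip y (orth_proj D x) = 0"
    proof (rule ip_orth_proj_eq_0[OF D])
      fix d
      assume "d \<in> D"
      then show "ip y d = 0"
        using y ip_cnj[of y d] by (simp add: D_def mem_label_span)
    qed
    ultimately show ?thesis
      using ip_cnj[of y x] by simp
  qed
  then show "y \<in> orth ip (label_span C \<kappa> A)"
    by (simp add: orth_def)
qed

lemma sjoin_label_span:
  assumes C: "orthonormal_basis C"
  shows "sjoin (label_span C \<kappa> A) (label_span C \<kappa> B) = label_span C \<kappa> (A \<union> B)"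
proof
  have "{x + y |x y. x \<in> label_span C \<kappa> A \<and> y \<in> label_span C \<kappa> B} \<subseteq> label_span C \<kappa> (A \<union> B)"
    by (auto simp: mem_label_span ip_add_right)
  moreover have "closed (label_span C \<kappa> (A \<union> B))"
    using closed_subspace_label_span unfolding closed_subspace_def by blast
  ultimately show "sjoin (label_span C \<kappa> A) (label_span C \<kappa> B) \<subseteq> label_span C \<kappa> (A \<union> B)"
    unfolding sjoin_def by (rule closure_minimal)
next
  show "label_span C \<kappa> (A \<union> B) \<subseteq> sjoin (label_span C \<kappa> A) (label_span C \<kappa> B)"
  proof
    fix x
    assume x: "x \<in> label_span C \<kappa> (A \<union> B)"
    define p where "p = orth_proj {c \<in> C. \<kappa> c \<in> A} x"
    have ip_p: "ip c p = (if \<kappa> c \<in> A then ip c x else 0)" if "c \<in> C" for c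
      using ip_orth_proj[of C "{c \<in> C. \<kappa> c \<in> A}" c x] C that
      unfolding p_def orthonormal_basis_def by auto
    have "p \<in> label_span C \<kappa> A"
      using ip_p by (simp add: mem_label_span)
    moreover have "x - p \<in> label_span C \<kappa> B"
      using ip_p x by (auto simp: mem_label_span ip_diff_right)
    moreover have "x = p + (x - p)"
      by simp
    ultimately have "x \<in> {x + y |x y. x \<in> label_span C \<kappa> A \<and> y \<in> label_span C \<kappa> B}"
      by blast
    then show "x \<in> sjoin (label_span C \<kappa> A) (label_span C \<kappa> B)"
      unfolding sjoin_def by (rule closure_subset[THEN subsetD])
  qed
qed

lemma label_span_singleton:
  assumes "orthonormal_basis C"
  shows "label_span C \<kappa> {i} = orth ip (orth ip {c \<in> C. \<kappa> c = i})"
  using orth_label_span[OF assms, of \<kappa> "- {i}"] by (simp add: label_span_def)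

lemma label_algebra:
  assumes C: "orthonormal_basis C"
  shows "range (label_span C \<kappa>) \<in> bool_subalgebras smul ip"
proof -
  have "range (label_span C \<kappa>) \<subseteq> LH smul"
    using closed_subspace_label_span by (auto simp: LH_def)
  moreover have "label_span C \<kappa> {} = {0}" "label_span C \<kappa> UNIV = UNIV"
    using label_span_empty[OF C] label_span_full[of \<kappa> C UNIV] by simp_all
  then have "{0} \<in> range (label_span C \<kappa>)" "UNIV \<in> range (label_span C \<kappa>)"
    by (metis rangeI)+
  ultimately show ?thesis
    unfolding bool_subalgebras_def
    by (auto simp: label_span_Int sjoin_label_span[OF C] orth_label_span[OF C] Int_Un_distrib)
qed

lemma label_algebra_coarsen: "range (label_span C (g \<circ> \<kappa>)) \<subseteq> range (label_span C \<kappa>)"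
  by (auto simp: label_span_comp)

lemma label_algebra_pair:
  assumes C: "orthonormal_basis C"
  shows "range (label_span C ((\<lambda>j. j = i) \<circ> \<kappa>)) =
    {{0}, label_span C \<kappa> {i}, orth ip (label_span C \<kappa> {i}), UNIV}"
proof -
  have "range (label_span C ((\<lambda>j. j = i) \<circ> \<kappa>)) =
      label_span C ((\<lambda>j. j = i) \<circ> \<kappa>) ` {{}, {True}, {False}, UNIV}"
    by (simp only: UNIV_bool_set)
  moreover have "(\<lambda>j. j = i) -` {False} = - {i}" "(\<lambda>j. j = i) -` {True} = {i}"
    by auto
  ultimately show ?thesis
    by (simp add: label_span_comp label_span_empty[OF C] label_span_full orth_label_span[OF C])
qed

lemma bool_hom_label_algebra:
  assumes C: "orthonormal_basis C" and f: "bool_hom ip (range (label_span C \<kappa>)) f"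
    and "finite I" and "\<kappa> ` C \<subseteq> I"
  shows "\<exists>!i\<in>I. f (label_span C \<kappa> {i})"
proof -
  have f_Union: "f (label_span C \<kappa> A) \<longleftrightarrow> (\<exists>i\<in>A. f (label_span C \<kappa> {i}))" if "finite A" for A
    using that
  proof (induction A rule: finite_induct)
    case empty
    then show ?case
      using f by (simp add: bool_hom_def label_span_empty[OF C])
  next
    case (insert i A)
    have "label_span C \<kappa> (insert i A) = sjoin (label_span C \<kappa> {i}) (label_span C \<kappa> A)"
      using sjoin_label_span[OF C, of \<kappa> "{i}" A] by simp
    then show ?case
      using f insert.IH unfolding bool_hom_def by auto
  qed
  have "f (label_span C \<kappa> I)"
    using f \<open>\<kappa> ` C \<subseteq> I\<close> by (simp add: bool_hom_def label_span_full)
  then have "\<exists>i\<in>I. f (label_span C \<kappa> {i})"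
    using f_Union \<open>finite I\<close> by blast
  moreover have "i = j" if "f (label_span C \<kappa> {i})" and "f (label_span C \<kappa> {j})" for i j
  proof (rule ccontr)
    assume "i \<noteq> j"
    then have "label_span C \<kappa> {i} \<inter> label_span C \<kappa> {j} = {0}"
      by (simp add: label_span_Int label_span_empty[OF C])
    then show False
      using f that unfolding bool_hom_def by (metis rangeI)
  qed
  ultimately show ?thesis
    by blast
qed

section \<open>Valuations from global sections\<close>

text \<open>A valuation in the sense of Kochen and Specker; orth ip (orth ip S) is the closed span of S.\<close>

definition partition_valuation :: "('a set \<Rightarrow> bool) \<Rightarrow> bool" where
  "partition_valuation v \<longleftrightarrow>
     (\<forall>C (\<kappa> :: 'a \<Rightarrow> nat) I. orthonormal_basis C \<and> finite I \<and> \<kappa> ` C \<subseteq> I \<longrightarrow>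
        (\<exists>!i\<in>I. v (orth ip (orth ip {c \<in> C. \<kappa> c = i}))))"

lemma partition_valuationD:
  fixes \<kappa> :: "'a \<Rightarrow> nat"
  assumes "partition_valuation v" and "orthonormal_basis C" and "finite I" and "\<kappa> ` C \<subseteq> I"
  shows "\<exists>!i\<in>I. v (orth ip (orth ip {c \<in> C. \<kappa> c = i}))"
  using assms(2-4) by (intro assms(1)[unfolded partition_valuation_def, rule_format]) simp

lemma partition_valuation_ex:
  fixes \<kappa> :: "'a \<Rightarrow> nat"
  assumes "partition_valuation v" and "orthonormal_basis C" and "finite I" and "\<kappa> ` C \<subseteq> I"
  shows "\<exists>i\<in>I. v (orth ip (orth ip {c \<in> C. \<kappa> c = i}))"
  using partition_valuationD[OF assms] by blast

lemma partition_valuation_unique: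
  fixes \<kappa> :: "'a \<Rightarrow> nat"
  assumes "partition_valuation v" and "orthonormal_basis C" and "finite I" and "\<kappa> ` C \<subseteq> I"
    and "i \<in> I" and "j \<in> I"
    and "v (orth ip (orth ip {c \<in> C. \<kappa> c = i}))" and "v (orth ip (orth ip {c \<in> C. \<kappa> c = j}))"
  shows "i = j"
  using partition_valuationD[OF assms(1-4)]
proof (rule ex1E)
  fix k
  assume "\<forall>l. l \<in> I \<and> v (orth ip (orth ip {c \<in> C. \<kappa> c = l})) \<longrightarrow> l = k"
  then show "i = j"
    using assms(5-) by blast
qed

lemma partition_valuation_empty:
  assumes "partition_valuation v" and "orthonormal_basis C"
  shows "\<not> v (orth ip (orth ip {}))"
proof
  assume "v (orth ip (orth ip {}))"
  then have "(0 :: nat) = 2"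
    by (intro partition_valuation_unique[OF assms, where \<kappa> = "\<lambda>_. 1" and I = "{0, 1, 2}"]) auto
  then show False
    by simp
qed

end

locale global_section = complex_hilbert_space smul ip
  for smul :: "complex \<Rightarrow> 'a::{real_normed_vector, complete_space} \<Rightarrow> 'a"
    and ip :: "'a \<Rightarrow> 'a \<Rightarrow> complex" +
  fixes \<tau> :: "'a set set \<Rightarrow> 'a set set \<times> ('a set \<Rightarrow> bool)"
  assumes continuous: "continuous_map (downset_topology (bool_subalgebras smul ip) (\<subseteq>))
                         (downset_topology (spectral_E smul ip) sheaf_le) \<tau>"
    and is_section: "\<forall>W\<in>bool_subalgebras smul ip. fst (\<tau> W) = W"
begin

text \<open>The value of P is read off in the smallest Boolean subalgebra containing P.\<close>

definition section_value :: "'a set \<Rightarrow> bool" where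
  "section_value P = snd (\<tau> {{0}, P, orth ip P, UNIV}) P"

lemma bool_hom_section: "W \<in> bool_subalgebras smul ip \<Longrightarrow> bool_hom ip W (snd (\<tau> W))"
proof -
  assume W: "W \<in> bool_subalgebras smul ip"
  then have "\<tau> W \<in> spectral_E smul ip"
    using continuous unfolding continuous_map_def topspace_downset_topology by blast
  then show ?thesis
    using is_section W unfolding spectral_E_def by (cases "\<tau> W") auto
qed

lemma section_restrict:
  assumes "W1 \<in> bool_subalgebras smul ip" and "W2 \<in> bool_subalgebras smul ip"
    and "W1 \<subseteq> W2" and "P \<in> W1"
  shows "snd (\<tau> W1) P = snd (\<tau> W2) P"
proof -
  have "reflp sheaf_le" "transp sheaf_le"
    by (auto simp: reflp_def transp_def sheaf_le_def)
  then have "sheaf_le (\<tau> W1) (\<tau> W2)"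
    using continuous_map_downset_topology_mono[OF continuous] assms(1-3) by blast
  then show ?thesis
    using is_section assms unfolding sheaf_le_def by simp
qed

lemma section_label_span:
  assumes C: "orthonormal_basis C"
  shows "snd (\<tau> (range (label_span C \<kappa>))) (label_span C \<kappa> {i}) = section_value (label_span C \<kappa> {i})"
proof -
  let ?Q = "{{0}, label_span C \<kappa> {i}, orth ip (label_span C \<kappa> {i}), UNIV}"
  have Q: "?Q = range (label_span C ((\<lambda>j. j = i) \<circ> \<kappa>))"
    using label_algebra_pair[OF C, where \<kappa> = \<kappa> and i = i] by simp
  have "?Q \<in> bool_subalgebras smul ip"
    unfolding Q by (rule label_algebra[OF C])
  moreover have "?Q \<subseteq> range (label_span C \<kappa>)"
    unfolding Q by (rule label_algebra_coarsen)
  ultimately have "snd (\<tau> ?Q) (label_span C \<kappa> {i}) = snd (\<tau> (range (label_span C \<kappa>))) (label_span C \<kappa> {i})"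
    by (intro section_restrict label_algebra[OF C]) auto
  then show ?thesis
    unfolding section_value_def by simp
qed

lemma partition_valuation_section_value: "partition_valuation section_value"
  unfolding partition_valuation_def
proof (intro allI impI, elim conjE)
  fix C I and \<kappa> :: "'a \<Rightarrow> nat"
  assume C: "orthonormal_basis C" and "finite I" and "\<kappa> ` C \<subseteq> I"
  have "bool_hom ip (range (label_span C \<kappa>)) (snd (\<tau> (range (label_span C \<kappa>))))"
    using bool_hom_section label_algebra[OF C] by blast
  from bool_hom_label_algebra[OF C this \<open>finite I\<close> \<open>\<kappa> ` C \<subseteq> I\<close>]
  have "\<exists>!i\<in>I. section_value (label_span C \<kappa> {i})"
    by (simp only: section_label_span[OF C])
  then show "\<exists>!i\<in>I. section_value (orth ip (orth ip {c \<in> C. \<kappa> c = i}))"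
    by (simp only: label_span_singleton[OF C])
qed

end

section \<open>Copying the configuration into a Hilbert space\<close>

text \<open>Each block \<beta> contributes the three basis vectors e (\<beta>, 1), e (\<beta>, 2), e (\<beta>, 3), and a
  direction w of three-space is copied into every block as lift (\<beta>, w); an orthogonal frame
  (a, b, c) then turns B into the orthonormal basis lifts a \<union> lifts b \<union> lifts c \<union> rest.\<close>

locale ks_embedding = complex_hilbert_space smul ip
  for smul :: "complex \<Rightarrow> 'a::{real_normed_vector, complete_space} \<Rightarrow> 'a"
    and ip :: "'a \<Rightarrow> 'a \<Rightarrow> complex" +
  fixes v :: "'a set \<Rightarrow> bool" and B :: "'a set" and blocks :: "'b set" and e :: "'b \<times> nat \<Rightarrow> 'a"
  assumes valuation: "partition_valuation v"
    and basis: "orthonormal_basis B"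
    and e_inj: "inj_on e (blocks \<times> {1, 2, 3})"
    and e_basis: "e ` (blocks \<times> {1, 2, 3}) \<subseteq> B"
    and rest_false: "\<not> v (orth ip (orth ip (B - e ` (blocks \<times> {1, 2, 3}))))"
begin

definition rest :: "'a set" where
  "rest = B - e ` (blocks \<times> {1, 2, 3})"

definition lift :: "'b \<times> int3 \<Rightarrow> 'a" where
  "lift = (\<lambda>(\<beta>, w). \<Sum>j\<in>{1, 2, 3}. smul (complex_of_real (unit_coord w j)) (e (\<beta>, j)))"

definition lifts :: "int3 \<Rightarrow> 'a set" where
  "lifts w = (\<lambda>\<beta>. lift (\<beta>, w)) ` blocks"

lemma ip_e:
  assumes "\<beta> \<in> blocks" "\<beta>' \<in> blocks" "j \<in> {1, 2, 3}" "k \<in> {1, 2, 3}"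
  shows "ip (e (\<beta>, j)) (e (\<beta>', k)) = (if \<beta> = \<beta>' \<and> j = k then 1 else 0)"
proof -
  have "e (\<beta>, j) = e (\<beta>', k) \<longleftrightarrow> \<beta> = \<beta>' \<and> j = k"
    using e_inj assms unfolding inj_on_def by blast
  moreover have "e (\<beta>, j) \<in> B" "e (\<beta>', k) \<in> B"
    using e_basis assms by auto
  ultimately show ?thesis
    using basis unfolding orthonormal_basis_def orthonormal_def by simp
qed

lemma ip_lift_left:
  "ip (lift (\<beta>, w)) x = (\<Sum>j\<in>{1, 2, 3}. complex_of_real (unit_coord w j) * ip (e (\<beta>, j)) x)"
  unfolding lift_def prod.case ip_sum_left by simp

lemma ip_lift:
  assumes "\<beta> \<in> blocks" "\<beta>' \<in> blocks"
  shows "ip (lift (\<beta>, u)) (lift (\<beta>', w)) =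
    (if \<beta> = \<beta>' then complex_of_real (\<Sum>j\<in>{1, 2, 3}. unit_coord u j * unit_coord w j) else 0)"
proof -
  have "ip (e (\<beta>, j)) (lift (\<beta>', w)) = (if \<beta> = \<beta>' then complex_of_real (unit_coord w j) else 0)"
    if "j \<in> {1, 2, 3}" for j
    using that assms unfolding lift_def prod.case ip_sum_right by (auto simp: ip_e)
  then show ?thesis
    by (simp add: ip_lift_left)
qed

lemma ip_lift_rest:
  assumes "\<beta> \<in> blocks" and "r \<in> rest"
  shows "ip (lift (\<beta>, w)) r = 0"
proof -
  have "ip (e (\<beta>, j)) r = 0" if "j \<in> {1, 2, 3}" for j
  proof -
    have "e (\<beta>, j) \<in> B" "r \<in> B" "e (\<beta>, j) \<noteq> r"
      using assms that e_basis unfolding rest_def by auto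
    then show ?thesis
      using basis unfolding orthonormal_basis_def orthonormal_def by simp
  qed
  then show ?thesis
    by (simp add: ip_lift_left)
qed

lemma ip_e_frame:
  assumes "orthogonal_frame (a, b, c)" and "j \<in> {1, 2, 3}"
  shows "ip (e (\<beta>, j)) x = complex_of_real (unit_coord a j) * ip (lift (\<beta>, a)) x
    + complex_of_real (unit_coord b j) * ip (lift (\<beta>, b)) x + complex_of_real (unit_coord c j) * ip (lift (\<beta>, c)) x"
proof -
  let ?X = "\<lambda>k. ip (e (\<beta>, k)) x"
  have "complex_of_real (unit_coord a j) * ip (lift (\<beta>, a)) x
      + complex_of_real (unit_coord b j) * ip (lift (\<beta>, b)) x + complex_of_real (unit_coord c j) * ip (lift (\<beta>, c)) x
    = (\<Sum>k\<in>{1, 2, 3}. complex_of_real (unit_coord a j * unit_coord a k + unit_coord b j * unit_coord b k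
        + unit_coord c j * unit_coord c k) * ?X k)"
    by (simp add: ip_lift_left algebra_simps)
  also have "\<dots> = (\<Sum>k\<in>{1, 2, 3}. if j = k then ?X k else 0)"
    using orthogonal_frame_complete[OF assms] by (intro sum.cong) auto
  finally show ?thesis
    using assms(2) by simp
qed

lemma lifts_orthonormal:
  assumes frame: "orthogonal_frame (a, b, c)"
  shows "orthonormal (lift ` (blocks \<times> {a, b, c}))"
proof (rule orthonormal_image)
  fix p q
  assume "p \<in> blocks \<times> {a, b, c}" and "q \<in> blocks \<times> {a, b, c}"
  then obtain \<beta> u \<beta>' w where pq: "p = (\<beta>, u)" "q = (\<beta>', w)"
    and "\<beta> \<in> blocks" "\<beta>' \<in> blocks" "u \<in> {a, b, c}" "w \<in> {a, b, c}"
    by auto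
  then have "ip (lift (\<beta>, u)) (lift (\<beta>', w)) =
      (if \<beta> = \<beta>' then complex_of_real (if u = w then 1 else 0) else 0)"
    by (simp only: ip_lift orthogonal_frame_orthonormal[OF frame])
  then show "ip (lift p) (lift q) = (if p = q then 1 else 0)"
    unfolding pq by simp
qed

lemma lifts_basis:
  assumes frame: "orthogonal_frame (a, b, c)"
  shows "orthonormal_basis (lifts a \<union> lifts b \<union> lifts c \<union> rest)"
proof (rule orthonormal_basisI)
  have lifts_eq: "lifts a \<union> lifts b \<union> lifts c = lift ` (blocks \<times> {a, b, c})"
    unfolding lifts_def by auto
  have "orthonormal rest"
    by (rule orthonormal_subset[of B]) (use basis in \<open>auto simp: orthonormal_basis_def rest_def\<close>)
  then show "orthonormal (lifts a \<union> lifts b \<union> lifts c \<union> rest)"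
    unfolding lifts_eq using lifts_orthonormal[OF frame] ip_lift_rest by (intro orthonormal_Un) auto
next
  fix x
  assume x: "x \<in> orth ip (lifts a \<union> lifts b \<union> lifts c \<union> rest)"
  have lifts_x: "ip (lift (\<beta>, w)) x = 0" if "\<beta> \<in> blocks" "w \<in> {a, b, c}" for \<beta> w
    using x that unfolding orth_def lifts_def by blast
  show "x = 0"
  proof (rule orthonormal_basis_eq_0[OF basis])
    fix d
    assume "d \<in> B"
    show "ip d x = 0"
    proof (cases "d \<in> rest")
      case True
      then show ?thesis
        using x unfolding orth_def by blast
    next
      case False
      then obtain \<beta> j where "\<beta> \<in> blocks" "j \<in> {1, 2, 3}" "d = e (\<beta>, j)"
        using \<open>d \<in> B\<close> unfolding rest_def by auto
      then show ?thesis
        using ip_e_frame[OF frame] lifts_x by simp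
    qed
  qed
qed

lemma lifts_disjoint:
  assumes frame: "orthogonal_frame (a, b, c)"
    and "u \<in> {a, b, c}" and "w \<in> {a, b, c}" and "u \<noteq> w"
  shows "lifts u \<inter> lifts w = {}"
proof -
  have "lift (\<beta>, u) \<noteq> lift (\<beta>', w)" if "\<beta> \<in> blocks" "\<beta>' \<in> blocks" for \<beta> \<beta>'
  proof
    assume eq: "lift (\<beta>, u) = lift (\<beta>', w)"
    have "ip (lift (\<beta>, u)) (lift (\<beta>', w)) = 0" "ip (lift (\<beta>, u)) (lift (\<beta>, u)) = 1"
      using that \<open>u \<noteq> w\<close>
      by (simp_all only: ip_lift orthogonal_frame_orthonormal[OF frame assms(2,2)]
          orthogonal_frame_orthonormal[OF frame assms(2,3)]) simp_all
    then show False
      using eq by simp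
  qed
  then show ?thesis
    unfolding lifts_def by blast
qed

lemma lifts_rest_disjoint: "lifts u \<inter> rest = {}"
proof -
  have "lift (\<beta>, u) \<notin> rest" if "\<beta> \<in> blocks" for \<beta>
  proof
    assume "lift (\<beta>, u) \<in> rest"
    have "ip (lift (\<beta>, u)) (lift (\<beta>, u)) = 0"
      using ip_lift_rest[OF that \<open>lift (\<beta>, u) \<in> rest\<close>] .
    moreover have "ip (lift (\<beta>, u)) (lift (\<beta>, u)) = 1"
      using \<open>lift (\<beta>, u) \<in> rest\<close> basis unfolding rest_def orthonormal_basis_def orthonormal_def by simp
    ultimately show False
      by simp
  qed
  then show ?thesis
    unfolding lifts_def by blast
qed

lemma exactly_one_lifts:
  assumes frame: "orthogonal_frame (a, b, c)"
  shows "exactly_one (\<lambda>w. v (orth ip (orth ip (lifts w)))) (a, b, c)"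
proof -
  define C where "C = lifts a \<union> lifts b \<union> lifts c \<union> rest"
  define \<kappa> :: "'a \<Rightarrow> nat" where
    "\<kappa> y = (if y \<in> lifts a then 1 else if y \<in> lifts b then 2 else if y \<in> lifts c then 3 else 0)" for y
  have "a \<noteq> b" "a \<noteq> c" "b \<noteq> c"
    using frame unfolding orthogonal_frame_def by auto
  then have "lifts a \<inter> lifts b = {}" "lifts a \<inter> lifts c = {}" "lifts b \<inter> lifts c = {}"
    using lifts_disjoint[OF frame] by simp_all
  then have classes: "{y \<in> C. \<kappa> y = 1} = lifts a" "{y \<in> C. \<kappa> y = 2} = lifts b"
    "{y \<in> C. \<kappa> y = 3} = lifts c" "{y \<in> C. \<kappa> y = 0} = rest"
    using lifts_rest_disjoint[of a] lifts_rest_disjoint[of b] lifts_rest_disjoint[of c]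
    unfolding C_def \<kappa>_def by auto
  have C: "orthonormal_basis C" "finite {0, 1, 2, 3 :: nat}" "\<kappa> ` C \<subseteq> {0, 1, 2, 3}"
    using lifts_basis[OF frame] by (auto simp: C_def \<kappa>_def)
  define W where "W i \<longleftrightarrow> v (orth ip (orth ip {y \<in> C. \<kappa> y = i}))" for i
  obtain i where i: "i \<in> {0, 1, 2, 3}" "W i"
    using partition_valuation_ex[OF valuation C] unfolding W_def by blast
  have W_iff: "W j \<longleftrightarrow> j = i" if "j \<in> {0, 1, 2, 3}" for j
    using partition_valuation_unique[OF valuation C that i(1)] i(2) unfolding W_def by blast
  have "\<not> W 0"
    using rest_false unfolding W_def classes rest_def .
  moreover have "v (orth ip (orth ip (lifts a))) = W 1" "v (orth ip (orth ip (lifts b))) = W 2"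
    "v (orth ip (orth ip (lifts c))) = W 3"
    unfolding W_def classes by simp_all
  ultimately show ?thesis
    using i(1) W_iff[of 0] W_iff[of 1] W_iff[of 2] W_iff[of 3] unfolding exactly_one_def by auto
qed

lemma inconsistent: False
proof -
  have "exactly_one (\<lambda>w. v (orth ip (orth ip (lifts w)))) t" if "t \<in> set ks_frames" for t
  proof -
    obtain a b c where t: "t = (a, b, c)"
      by (rule prod_cases3)
    show ?thesis
      using exactly_one_lifts ks_frames_orthogonal that unfolding t by blast
  qed
  then show False
    using ks_frames_uncolourable by blast
qed

end

context complex_hilbert_space
begin

lemma partition_valuation_atom:
  assumes v: "partition_valuation v" and B: "orthonormal_basis B" and "finite B"
  obtains b where "b \<in> B" and "v (orth ip (orth ip {b}))"
proof -
  obtain f :: "'a \<Rightarrow> nat" where "inj_on f B"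
    using finite_imp_inj_to_nat_seg[OF \<open>finite B\<close>] by blast
  obtain i where "i \<in> f ` B" and i: "v (orth ip (orth ip {c \<in> B. f c = i}))"
    using partition_valuation_ex[OF v B finite_imageI[OF \<open>finite B\<close>] subset_refl] by blast
  then obtain b where "b \<in> B" and "i = f b"
    by blast
  moreover have "{c \<in> B. f c = f b} = {b}"
    using \<open>inj_on f B\<close> \<open>b \<in> B\<close> unfolding inj_on_def by blast
  ultimately show ?thesis
    using that i by simp
qed

lemma partition_valuation_complement:
  assumes v: "partition_valuation v" and B: "orthonormal_basis B"
    and "b \<in> S" and "S \<subseteq> B" and b: "v (orth ip (orth ip {b}))"
  shows "\<not> v (orth ip (orth ip (B - S)))"
proof
  assume rest: "v (orth ip (orth ip (B - S)))"
  define \<kappa> :: "'a \<Rightarrow> nat" where "\<kappa> c = (if c = b then 1 else if c \<in> S then 2 else 0)" for c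
  have classes: "{c \<in> B. \<kappa> c = 0} = B - S" "{c \<in> B. \<kappa> c = 1} = {b}"
    using assms(3,4) by (auto simp: \<kappa>_def)
  have v0: "v (orth ip (orth ip {c \<in> B. \<kappa> c = 0}))"
    using rest unfolding classes .
  have v1: "v (orth ip (orth ip {c \<in> B. \<kappa> c = 1}))"
    using b unfolding classes .
  have "\<kappa> ` B \<subseteq> {0, 1, 2}"
    by (auto simp: \<kappa>_def)
  have "(0 :: nat) = 1"
    by (rule partition_valuation_unique[OF v B _ \<open>\<kappa> ` B \<subseteq> {0, 1, 2}\<close> _ _ v0 v1]) simp_all
  then show False
    by simp
qed

lemma block_decomposition:
  assumes v: "partition_valuation v" and B: "orthonormal_basis B"
    and "{e1, e2, e3} \<subseteq> B" and "e1 \<noteq> e2" and "e1 \<noteq> e3" and "e2 \<noteq> e3"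
  obtains blocks :: "'a set" and e :: "'a \<times> nat \<Rightarrow> 'a" where "inj_on e (blocks \<times> {1, 2, 3})"
    and "e ` (blocks \<times> {1, 2, 3}) \<subseteq> B" and "\<not> v (orth ip (orth ip (B - e ` (blocks \<times> {1, 2, 3}))))"
proof (cases "finite B")
  case True
  then obtain b1 where "b1 \<in> B" and b1: "v (orth ip (orth ip {b1}))"
    using partition_valuation_atom[OF v B] by blast
  obtain b2 b3 where "b2 \<in> B" "b3 \<in> B" "b1 \<noteq> b2" "b1 \<noteq> b3" "b2 \<noteq> b3"
  proof -
    consider "b1 \<noteq> e1" "b1 \<noteq> e2" | "b1 \<noteq> e1" "b1 \<noteq> e3" | "b1 \<noteq> e2" "b1 \<noteq> e3"
      using assms(4-) by blast
    then show ?thesis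
      by cases (use that assms(3-) in auto)
  qed
  define e where "e = (\<lambda>(\<beta> :: 'a, j :: nat). if j = 1 then b1 else if j = 2 then b2 else b3)"
  have image: "e ` ({b1} \<times> {1, 2, 3}) = {b1, b2, b3}"
    by (auto simp: e_def)
  have "inj_on e ({b1} \<times> {1, 2, 3})"
    using \<open>b1 \<noteq> b2\<close> \<open>b1 \<noteq> b3\<close> \<open>b2 \<noteq> b3\<close> by (auto simp: inj_on_def e_def)
  moreover have "e ` ({b1} \<times> {1, 2, 3}) \<subseteq> B"
    unfolding image using \<open>b1 \<in> B\<close> \<open>b2 \<in> B\<close> \<open>b3 \<in> B\<close> by simp
  moreover have "\<not> v (orth ip (orth ip (B - e ` ({b1} \<times> {1, 2, 3}))))"
    unfolding image using partition_valuation_complement[OF v B _ _ b1] \<open>b1 \<in> B\<close> \<open>b2 \<in> B\<close> \<open>b3 \<in> B\<close>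
    by simp
  ultimately show ?thesis
    using that by blast
next
  case False
  then obtain h where h: "bij_betw h (B \<times> {1, 2, 3 :: nat}) B"
    using infinite_Times_bij[of B "{1, 2, 3 :: nat}"] by auto
  then show ?thesis
    using that[of h B] partition_valuation_empty[OF v B] by (simp add: bij_betw_def)
qed

theorem no_partition_valuation:
  assumes "dim_gt_2 smul"
  shows "\<not> partition_valuation v"
proof
  assume v: "partition_valuation v"
  obtain e1 e2 e3 where "orthonormal {e1, e2, e3}" and "e1 \<noteq> e2" "e1 \<noteq> e3" "e2 \<noteq> e3"
    using three_orthonormal[OF assms] by blast
  moreover obtain B where "{e1, e2, e3} \<subseteq> B" and B: "orthonormal_basis B"
    using orthonormal_basis_extend \<open>orthonormal {e1, e2, e3}\<close> by blast
  ultimately obtain blocks :: "'a set" and e where "ks_embedding smul ip v B blocks e"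
    using block_decomposition[OF v B] unfolding ks_embedding_def ks_embedding_axioms_def
    by (metis complex_hilbert_space_axioms v B)
  then show False
    by (rule ks_embedding.inconsistent)
qed

end

theorem theorem4p3:
  fixes smul :: "complex \<Rightarrow> 'a::{real_normed_vector, complete_space} \<Rightarrow> 'a"
    and ip :: "'a \<Rightarrow> 'a \<Rightarrow> complex"
  assumes "complex_hilbert smul ip"
    and "dim_gt_2 smul"
  shows "\<not> (\<exists>\<tau>. continuous_map (downset_topology (bool_subalgebras smul ip) (\<subseteq>))
                               (downset_topology (spectral_E smul ip) sheaf_le) \<tau>
              \<and> (\<forall>W\<in>bool_subalgebras smul ip. fst (\<tau> W) = W))"
proof
  assume "\<exists>\<tau>. continuous_map (downset_topology (bool_subalgebras smul ip) (\<subseteq>))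
                 (downset_topology (spectral_E smul ip) sheaf_le) \<tau>
            \<and> (\<forall>W\<in>bool_subalgebras smul ip. fst (\<tau> W) = W)"
  then obtain \<tau> where "continuous_map (downset_topology (bool_subalgebras smul ip) (\<subseteq>))
                            (downset_topology (spectral_E smul ip) sheaf_le) \<tau>"
    and "\<forall>W\<in>bool_subalgebras smul ip. fst (\<tau> W) = W"
    by blast
  then interpret global_section smul ip \<tau>
    using assms(1) by unfold_locales
  show False
    using no_partition_valuation[OF assms(2)] partition_valuation_section_value by blast
qed

end
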